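(* Under the standing assumptions, if $a<0$ then $z(\theta)$ is negative and strictly increasing on $(\pi/2,\pi)$.
   Context: Standing assumptions: $a,b\in\mathbb{R}$ with $b>0$, $1+a+b>0$, $9-27a+b>0$, $2-8a+8a^2+ab\ne0$, $b+1-a\ne0$. Let $f^*(\zeta,\theta)=(\zeta+2\cos\theta)(2\zeta\cos\theta+1)+b\zeta-a(\zeta+2\cos\theta)^3$. Under these assumptions, for each $\theta\in(\pi/2,\pi)$ the polynomial $f^*(\cdot,\theta)$ has exactly one real zero in $(-1,1)$; denote it $w(\theta)$ (so $\zeta(\theta)=1/w(\theta)$). Define $\tau(\theta)=-w(\theta)-2\cos\theta$ and $z(\theta)=-\dfrac{w(\theta)}{\tau(\theta)^3}$ (i.e. $z=-1/(\zeta\tau^3)$). *)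

theory Defs
  imports Complex_Main
begin

definition fstar :: "real \<Rightarrow> real \<Rightarrow> real \<Rightarrow> real \<Rightarrow> real" where
  "fstar a b \<zeta> \<theta> = (\<zeta> + 2 * cos \<theta>) * (2 * \<zeta> * cos \<theta> + 1) + b * \<zeta>
      - a * (\<zeta> + 2 * cos \<theta>) ^ 3"

text \<open>The unique real zero of fstar a b (.) theta in the open interval (-1,1)
  (its uniqueness for theta in (pi/2, pi) is part of the standing assumptions).\<close>
definition wzero :: "real \<Rightarrow> real \<Rightarrow> real \<Rightarrow> real" where
  "wzero a b \<theta> = (THE x. -1 < x \<and> x < 1 \<and> fstar a b x \<theta> = 0)"

definition tau :: "real \<Rightarrow> real \<Rightarrow> real \<Rightarrow> real" where
  "tau a b \<theta> = - wzero a b \<theta> - 2 * cos \<theta>"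

definition zfun :: "real \<Rightarrow> real \<Rightarrow> real \<Rightarrow> real" where
  "zfun a b \<theta> = - wzero a b \<theta> / (tau a b \<theta>) ^ 3"

end

theory Submission
  imports Defs
begin

text \<open>Write \<open>c = cos \<theta> \<in> (-1,0)\<close>. For \<open>a < 0\<close> the cubic \<open>w \<mapsto> f\<^sup>*(w,\<theta>)\<close> is strictly
  increasing on \<open>(-\<infinity>,1)\<close>, negative at \<open>0\<close> and positive at \<open>min 1 (-2c)\<close>, so its zero \<open>w\<close>
  lies in \<open>(0, min 1 (-2c))\<close>; hence \<open>\<tau> = -w - 2c > 0\<close> and \<open>z = -w/\<tau>\<^sup>3 < 0\<close>.
  Comparing \<open>f\<^sup>*\<close> at two values of \<open>c\<close> shows that \<open>\<tau>\<close> increases as \<open>c\<close> decreases, i.e. as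
  \<open>\<theta>\<close> increases. Dividing \<open>f\<^sup>*\<close> by \<open>\<tau>\<^sup>3\<close> gives an equation \<open>Z(\<tau>\<^sup>2, z) = 0\<close> whose negative
  solution \<open>z\<close> increases strictly with \<open>\<tau>\<^sup>2\<close>.\<close>

definition fpoly :: "real \<Rightarrow> real \<Rightarrow> real \<Rightarrow> real \<Rightarrow> real" where
  "fpoly a b c w = (w + 2 * c) * (2 * c * w + 1) + b * w - a * (w + 2 * c) ^ 3"

lemma fstar_eq_fpoly: "fstar a b w \<theta> = fpoly a b (cos \<theta>) w"
  by (simp add: fstar_def fpoly_def)

lemma fpoly_strict_mono:
  fixes a b c :: real
  assumes "a \<le> 0" "b > 0" "c \<le> 0"
  shows "strict_mono_on {..<1} (fpoly a b c)"
proof (rule strict_mono_onI)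
  fix x y :: real
  assume "x \<in> {..<1}" "y \<in> {..<1}" "x < y"
  then have "x + y < 2" by simp
  define u v where "u = x + 2 * c" and "v = y + 2 * c"
  have "u\<^sup>2 + u * v + v\<^sup>2 = (v + u / 2)\<^sup>2 + 3 / 4 * u\<^sup>2"
    by (simp add: power2_eq_square algebra_simps)
  then have "- a * (u\<^sup>2 + u * v + v\<^sup>2) \<ge> 0"
    using \<open>a \<le> 0\<close> by (simp add: mult_nonpos_nonneg)
  moreover have "c * 2 \<le> c * (x + y)"
    using \<open>c \<le> 0\<close> \<open>x + y < 2\<close> by (intro mult_left_mono_neg) auto
  moreover have "(2 * c + 1)\<^sup>2 \<ge> 0" by simp
  ultimately have "- a * (u\<^sup>2 + u * v + v\<^sup>2) + 2 * c * (x + y) + 4 * c\<^sup>2 + 1 + b > 0"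
    using \<open>b > 0\<close> by (simp add: power2_eq_square algebra_simps)
  with \<open>x < y\<close> have "(y - x) * (- a * (u\<^sup>2 + u * v + v\<^sup>2) + 2 * c * (x + y) + 4 * c\<^sup>2 + 1 + b) > 0"
    by (intro mult_pos_pos) simp_all
  moreover have "fpoly a b c y - fpoly a b c x
      = (y - x) * (- a * (u\<^sup>2 + u * v + v\<^sup>2) + 2 * c * (x + y) + 4 * c\<^sup>2 + 1 + b)"
    unfolding fpoly_def u_def v_def by (simp add: algebra_simps power2_eq_square power3_eq_cube)
  ultimately show "fpoly a b c x < fpoly a b c y"
    by linarith
qed

lemma fpoly_at_0_neg:
  fixes a b c :: real
  assumes "a \<le> 0" "c < 0"
  shows "fpoly a b c 0 < 0"
proof -
  have "fpoly a b c 0 = 2 * c * (1 - 4 * a * c\<^sup>2)"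
    unfolding fpoly_def by (simp add: algebra_simps power2_eq_square power3_eq_cube)
  moreover have "a * c\<^sup>2 \<le> 0"
    using assms by (simp add: mult_nonpos_nonneg)
  ultimately show ?thesis
    using assms by (simp add: mult_neg_pos)
qed

lemma fpoly_at_1_pos:
  fixes a b c :: real
  assumes "a \<le> 0" "b > 0" "1 + a + b > 0" "-1 < c" "c < 0"
  shows "fpoly a b c 1 > 0"
proof -
  define v where "v = 1 + 2 * c"
  have "-1 < v" "v < 1"
    using assms by (auto simp: v_def)
  have "fpoly a b c 1 = v\<^sup>2 * (1 - a * v) + b"
    unfolding fpoly_def v_def by (simp add: algebra_simps power2_eq_square power3_eq_cube)
  moreover have "v\<^sup>2 * (1 - a * v) + b > 0"
  proof (cases "1 - a * v \<ge> 0")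
    case True
    then have "v\<^sup>2 * (1 - a * v) \<ge> 0" by simp
    then show ?thesis
      using \<open>b > 0\<close> by simp
  next
    case False
    have "1 + a \<le> 1 - a * v"
      using mult_left_mono_neg[of "-1" v a] \<open>a \<le> 0\<close> \<open>-1 < v\<close> by simp
    have "v\<^sup>2 \<le> 1"
      using \<open>-1 < v\<close> \<open>v < 1\<close> by (simp add: abs_square_le_1)
    then have "1 * (1 + a) \<le> v\<^sup>2 * (1 + a)"
      using False \<open>1 + a \<le> 1 - a * v\<close> by (intro mult_right_mono_neg) simp_all
    also have "\<dots> \<le> v\<^sup>2 * (1 - a * v)"
      using \<open>1 + a \<le> 1 - a * v\<close> by (simp add: mult_left_mono)
    finally show ?thesis
      using \<open>1 + a + b > 0\<close> by simp
  qed
  ultimately show ?thesis by simp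
qed

lemma fpoly_at_neg2c_pos:
  fixes a b c :: real
  assumes "b > 0" "c < 0"
  shows "fpoly a b c (- 2 * c) > 0"
proof -
  have "fpoly a b c (- 2 * c) = - 2 * b * c"
    unfolding fpoly_def by (simp add: algebra_simps power2_eq_square power3_eq_cube)
  then show ?thesis
    using assms by (simp add: mult_pos_neg)
qed

lemma fpoly_root_exists:
  fixes a b c :: real
  assumes "a \<le> 0" "b > 0" "1 + a + b > 0" "-1 < c" "c < 0"
  shows "\<exists>w. 0 < w \<and> w < 1 \<and> w < - 2 * c \<and> fpoly a b c w = 0"
proof -
  define m where "m = min 1 (- 2 * c)"
  have "fpoly a b c m > 0"
    using fpoly_at_1_pos[OF assms] fpoly_at_neg2c_pos[of b c a] assms
    by (cases "1 \<le> - 2 * c") (auto simp: m_def)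
  moreover have "fpoly a b c 0 < 0"
    using fpoly_at_0_neg assms by blast
  moreover have "0 \<le> m"
    using assms by (simp add: m_def)
  moreover have "continuous_on {0..m} (fpoly a b c)"
    unfolding fpoly_def by (intro continuous_intros)
  ultimately obtain w where "0 \<le> w" "w \<le> m" "fpoly a b c w = 0"
    using IVT'[of "fpoly a b c" 0 0 m] by auto
  with \<open>fpoly a b c m > 0\<close> \<open>fpoly a b c 0 < 0\<close> have "0 < w" "w < m"
    by (auto simp: order.order_iff_strict)
  with \<open>fpoly a b c w = 0\<close> show ?thesis
    by (auto simp: m_def)
qed

lemma cos_bounds_second_quadrant:
  assumes "\<theta> \<in> {pi/2<..<pi}"
  shows "-1 < cos \<theta>" "cos \<theta> < 0"
proof -
  have "cos pi < cos \<theta>" "cos \<theta> < cos (pi / 2)"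
    using assms by (intro cos_monotone_0_pi; simp)+
  then show "-1 < cos \<theta>" "cos \<theta> < 0" by simp_all
qed

lemma wzero_root:
  fixes a b \<theta> :: real
  assumes "a \<le> 0" "b > 0" "1 + a + b > 0" "\<theta> \<in> {pi/2<..<pi}"
  shows "0 < wzero a b \<theta>" "wzero a b \<theta> < 1" "wzero a b \<theta> < - 2 * cos \<theta>"
    and "fpoly a b (cos \<theta>) (wzero a b \<theta>) = 0"
proof -
  note c = cos_bounds_second_quadrant[OF assms(4)]
  obtain w where w: "0 < w" "w < 1" "w < - 2 * cos \<theta>" "fpoly a b (cos \<theta>) w = 0"
    using fpoly_root_exists[OF assms(1-3) c] by blast
  have inj: "inj_on (fpoly a b (cos \<theta>)) {..<1}"
    using fpoly_strict_mono[OF assms(1,2) less_imp_le[OF c(2)]] by (rule strict_mono_on_imp_inj_on)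
  have "wzero a b \<theta> = w"
    unfolding wzero_def fstar_eq_fpoly
  proof (rule the_equality)
    fix x
    assume "-1 < x \<and> x < 1 \<and> fpoly a b (cos \<theta>) x = 0"
    then show "x = w"
      using inj_onD[OF inj, of x w] w by simp
  qed (use w in simp)
  with w show "0 < wzero a b \<theta>" "wzero a b \<theta> < 1" "wzero a b \<theta> < - 2 * cos \<theta>"
    and "fpoly a b (cos \<theta>) (wzero a b \<theta>) = 0" by simp_all
qed

text \<open>Shifting the root \<open>w\<^sub>1\<close> of \<open>fpoly a b c\<^sub>1\<close> by \<open>2(c\<^sub>1 - c\<^sub>2)\<close> keeps \<open>w + 2c\<close> fixed and
  makes \<open>fpoly a b c\<^sub>2\<close> positive there, so the root \<open>w\<^sub>2\<close> lies to the left of the shifted point.\<close>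

lemma fpoly_root_tau_antimono:
  fixes a b c\<^sub>1 c\<^sub>2 w\<^sub>1 w\<^sub>2 :: real
  assumes "a \<le> 0" "b > 0" "c\<^sub>2 < c\<^sub>1" "c\<^sub>1 < 0"
    and "0 < w\<^sub>1" "w\<^sub>1 < - 2 * c\<^sub>1" "fpoly a b c\<^sub>1 w\<^sub>1 = 0"
    and "w\<^sub>2 < 1" "fpoly a b c\<^sub>2 w\<^sub>2 = 0"
  shows "- w\<^sub>1 - 2 * c\<^sub>1 < - w\<^sub>2 - 2 * c\<^sub>2"
proof (rule ccontr)
  assume "\<not> - w\<^sub>1 - 2 * c\<^sub>1 < - w\<^sub>2 - 2 * c\<^sub>2"
  define x where "x = w\<^sub>1 + 2 * c\<^sub>1 - 2 * c\<^sub>2"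
  have "x \<le> w\<^sub>2"
    using \<open>\<not> - w\<^sub>1 - 2 * c\<^sub>1 < - w\<^sub>2 - 2 * c\<^sub>2\<close> by (simp add: x_def)
  have "(w\<^sub>1 + 2 * c\<^sub>1) * (w\<^sub>1 - 2 * c\<^sub>2) < 0"
    using assms by (simp add: mult_neg_pos)
  then have "2 * ((w\<^sub>1 + 2 * c\<^sub>1) * (w\<^sub>1 - 2 * c\<^sub>2)) - 2 * b < 0"
    using \<open>b > 0\<close> by linarith
  moreover have "fpoly a b c\<^sub>2 x = fpoly a b c\<^sub>1 w\<^sub>1
      + (c\<^sub>2 - c\<^sub>1) * (2 * ((w\<^sub>1 + 2 * c\<^sub>1) * (w\<^sub>1 - 2 * c\<^sub>2)) - 2 * b)"
    unfolding fpoly_def x_def by (simp add: algebra_simps power2_eq_square power3_eq_cube)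
  ultimately have "fpoly a b c\<^sub>2 x > 0"
    using assms by (simp add: mult_neg_neg)
  have "strict_mono_on {..<1} (fpoly a b c\<^sub>2)"
    using assms by (intro fpoly_strict_mono) simp_all
  then have "fpoly a b c\<^sub>2 x \<le> fpoly a b c\<^sub>2 w\<^sub>2"
    using \<open>x \<le> w\<^sub>2\<close> \<open>w\<^sub>2 < 1\<close> by (simp add: strict_mono_on_leD)
  with \<open>fpoly a b c\<^sub>2 x > 0\<close> show False
    using assms by simp
qed

text \<open>\<open>Z(s, z)\<close>: \<open>fpoly a b c w / \<tau>\<^sup>3\<close> for \<open>\<tau> = -w - 2c\<close>, expressed in \<open>s = \<tau>\<^sup>2\<close> and \<open>z = -w/\<tau>\<^sup>3\<close>.\<close>

definition zrel :: "real \<Rightarrow> real \<Rightarrow> real \<Rightarrow> real \<Rightarrow> real" where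
  "zrel a b s z = z\<^sup>2 * s\<^sup>2 - z * s - b * z - 1 / s + a"

lemma zrel_tau_eq:
  fixes a b c w t :: real
  assumes "t = - w - 2 * c" "t \<noteq> 0"
  shows "zrel a b (t\<^sup>2) (- w / t ^ 3) = fpoly a b c w / t ^ 3"
proof -
  have "c = - (t + w) / 2"
    using assms(1) by simp
  have f: "fpoly a b c w = t * (w\<^sup>2 + w * t - 1) + b * w + a * t ^ 3"
    unfolding fpoly_def \<open>c = - (t + w) / 2\<close> by (simp add: field_simps power2_eq_square power3_eq_cube)
  show ?thesis
    using assms(2) unfolding zrel_def f by (simp add: field_simps power2_eq_square power3_eq_cube)
qed

lemma zrel_root_strict_mono:
  fixes a b s\<^sub>1 s\<^sub>2 z\<^sub>1 z\<^sub>2 :: real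
  assumes "b > 0" "0 < s\<^sub>1" "s\<^sub>1 < s\<^sub>2" "z\<^sub>1 < 0" "z\<^sub>2 < 0"
    and "zrel a b s\<^sub>1 z\<^sub>1 = 0" "zrel a b s\<^sub>2 z\<^sub>2 = 0"
  shows "z\<^sub>1 < z\<^sub>2"
proof (rule ccontr)
  assume "\<not> z\<^sub>1 < z\<^sub>2"
  have "s\<^sub>1\<^sup>2 < s\<^sub>2\<^sup>2"
    using assms by (simp add: power_strict_mono)
  then have "z\<^sub>1\<^sup>2 * (s\<^sub>2\<^sup>2 - s\<^sub>1\<^sup>2) \<ge> 0"
    by simp
  moreover have "- z\<^sub>1 * (s\<^sub>2 - s\<^sub>1) > 0" "1 / s\<^sub>1 - 1 / s\<^sub>2 > 0"
    using assms by (simp_all add: mult_neg_pos frac_less2)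
  moreover have "zrel a b s\<^sub>2 z\<^sub>1 = zrel a b s\<^sub>1 z\<^sub>1
      + z\<^sub>1\<^sup>2 * (s\<^sub>2\<^sup>2 - s\<^sub>1\<^sup>2) + (- z\<^sub>1 * (s\<^sub>2 - s\<^sub>1)) + (1 / s\<^sub>1 - 1 / s\<^sub>2)"
    unfolding zrel_def by (simp add: algebra_simps)
  ultimately have "zrel a b s\<^sub>2 z\<^sub>1 > 0"
    using \<open>zrel a b s\<^sub>1 z\<^sub>1 = 0\<close> by linarith
  have "s\<^sub>2\<^sup>2 * (z\<^sub>1 + z\<^sub>2) \<le> 0"
    using assms by (simp add: mult_nonneg_nonpos)
  then have "(z\<^sub>1 - z\<^sub>2) * (s\<^sub>2\<^sup>2 * (z\<^sub>1 + z\<^sub>2) - s\<^sub>2 - b) \<le> 0"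
    using \<open>\<not> z\<^sub>1 < z\<^sub>2\<close> assms by (intro mult_nonneg_nonpos) simp_all
  moreover have "zrel a b s\<^sub>2 z\<^sub>1
      = zrel a b s\<^sub>2 z\<^sub>2 + (z\<^sub>1 - z\<^sub>2) * (s\<^sub>2\<^sup>2 * (z\<^sub>1 + z\<^sub>2) - s\<^sub>2 - b)"
    unfolding zrel_def by (simp add: algebra_simps power2_eq_square)
  ultimately show False
    using \<open>zrel a b s\<^sub>2 z\<^sub>1 > 0\<close> \<open>zrel a b s\<^sub>2 z\<^sub>2 = 0\<close> by linarith
qed

theorem mainTheorem14:
  fixes a b :: real
  assumes "b > 0" and "1 + a + b > 0" and "9 - 27 * a + b > 0"
    and "2 - 8 * a + 8 * a ^ 2 + a * b \<noteq> 0" and "b + 1 - a \<noteq> 0"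
    and "a < 0"
  shows "(\<forall>\<theta>\<in>{pi/2<..<pi}. zfun a b \<theta> < 0) \<and> strict_mono_on {pi/2<..<pi} (zfun a b)"
proof -
  note w = wzero_root[OF less_imp_le[OF \<open>a < 0\<close>] \<open>b > 0\<close> \<open>1 + a + b > 0\<close>]
  have tau_pos: "tau a b \<theta> > 0" if "\<theta> \<in> {pi/2<..<pi}" for \<theta>
    using w(3)[OF that] by (simp add: tau_def)
  have z_neg: "zfun a b \<theta> < 0" if "\<theta> \<in> {pi/2<..<pi}" for \<theta>
    using w(1)[OF that] tau_pos[OF that] by (simp add: zfun_def divide_pos_pos)
  have z_rel: "zrel a b ((tau a b \<theta>)\<^sup>2) (zfun a b \<theta>) = 0" if "\<theta> \<in> {pi/2<..<pi}" for \<theta>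
    unfolding zfun_def zrel_tau_eq[OF tau_def less_imp_neq[OF tau_pos[OF that], symmetric]] w(4)[OF that]
    by simp
  have "zfun a b r < zfun a b s"
    if r: "r \<in> {pi/2<..<pi}" and s: "s \<in> {pi/2<..<pi}" and "r < s" for r s
  proof -
    have "cos s < cos r"
      using r s \<open>r < s\<close> by (intro cos_monotone_0_pi) auto
    then have "tau a b r < tau a b s"
      unfolding tau_def
      using w[OF r] w[OF s] cos_bounds_second_quadrant[OF r] \<open>a < 0\<close> \<open>b > 0\<close>
      by (intro fpoly_root_tau_antimono) auto
    then have "(tau a b r)\<^sup>2 < (tau a b s)\<^sup>2"
      using tau_pos[OF r] by (simp add: power_strict_mono)
    with tau_pos[OF r] show ?thesis
      by (intro zrel_root_strict_mono[OF \<open>b > 0\<close> _ _ z_neg[OF r] z_neg[OF s] z_rel[OF r] z_rel[OF s]])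
        simp_all
  qed
  then show ?thesis
    using z_neg by (auto intro: strict_mono_onI)
qed

end
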